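(* The Continuum Hypothesis implies $\chi_{\rm CF}(\omega_1,\omega_1,\omega)=\chi_{\rm CF}(\omega_1,\omega,\omega)=\omega_1$.
   Context: For a family $\mathcal A$ and cardinal $\rho$, $f:\bigcup\mathcal A\to\rho$ is a conflict free coloring of $\mathcal A$ if for every $A\in\mathcal A$ some $\zeta<\rho$ has $|A\cap f^{-1}\{\zeta\}|=1$; $\chi_{\rm CF}(\mathcal A)$ is the least such $\rho$. A $(\lambda,\kappa,\mu)$-system is a family of $\lambda$ sets each of size $\kappa$, distinct members meeting in fewer than $\mu$ points; $\chi_{\rm CF}(\lambda,\kappa,\mu)$ is the supremum of $\chi_{\rm CF}(\mathcal A)$ over all $(\lambda,\kappa,\mu)$-systems $\mathcal A$. *)

theory Defs
  imports Complex_Main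
begin

unbundle cardinal_syntax

text \<open>Cardinals are represented as in HOL's BNF cardinal library: well-order relations,
  compared via ordLeq / ordLess / ordIso.  omega = natLeq, omega_1 = cardSuc natLeq.\<close>

abbreviation omega0 :: "nat rel" where "omega0 \<equiv> natLeq"
abbreviation omega1 :: "nat set rel" where "omega1 \<equiv> cardSuc natLeq"

definition CH :: bool where
  "CH \<longleftrightarrow> |UNIV :: real set| =o omega1"

definition cf_coloring :: "'a set set \<Rightarrow> ('a \<Rightarrow> 'c) \<Rightarrow> 'c set \<Rightarrow> bool" where
  "cf_coloring A f C \<longleftrightarrow> f ` (\<Union>A) \<subseteq> C \<and>
     (\<forall>X\<in>A. \<exists>z\<in>C. \<exists>!x. x \<in> X \<and> f x = z)"

text \<open>Colours are taken from the type nat set, which has size continuum, so it is large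
  enough for every rho <= omega_1 relevant here.\<close>
definition chiCF_le :: "'a set set \<Rightarrow> 'b rel \<Rightarrow> bool" where
  "chiCF_le A \<rho> \<longleftrightarrow> (\<exists>(f :: 'a \<Rightarrow> nat set) C. cf_coloring A f C \<and> |C| \<le>o \<rho>)"

definition system :: "'a set set \<Rightarrow> 'b rel \<Rightarrow> 'c rel \<Rightarrow> 'd rel \<Rightarrow> bool" where
  "system A lam kap mu \<longleftrightarrow> |A| =o lam \<and> (\<forall>X\<in>A. |X| =o kap) \<and>
     (\<forall>X\<in>A. \<forall>Y\<in>A. X \<noteq> Y \<longrightarrow> |X \<inter> Y| <o mu)"

end

theory Submission
  imports Defs "HOL-Library.Countable_Set" "HOL-Analysis.Abstract_Topology_2"
begin

text \<open>
  An injective colouring is conflict free, and a family of \<open>\<aleph>\<^sub>1\<close> sets of size at most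
  \<open>\<aleph>\<^sub>1\<close> has a union of size \<open>\<aleph>\<^sub>1\<close>; this gives the upper bound \<open>\<omega>\<^sub>1\<close>.

  For the lower bound let \<open>\<omega> \<le> \<kappa> \<le> \<omega>\<^sub>1\<close>. Inside \<open>\<omega>\<^sub>1\<close> take pairwise disjoint sets
  \<open>R\<^sub>\<eta>\<close> (\<open>\<eta> < \<omega>\<^sub>1\<close>) of size \<open>\<kappa>\<close>, and let the system consist of the sets \<open>P\<^sub>\<eta> \<union> R\<^sub>\<eta>\<close>,
  where \<open>P\<^sub>\<eta>\<close> is a countable set of order type \<open>\<omega>\<close> chosen by transfinite recursion: it is
  almost disjoint from the earlier \<open>P\<^sub>\<zeta>\<close> and from every \<open>R\<^sub>z\<close>, and it meets twice each set of
  a countable family guessed at stage \<open>\<eta>\<close>, pairing each of its points with another point of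
  one such set. By CH the guesses can run through all countable families of countable subsets
  of \<open>\<omega>\<^sub>1\<close>, each one uncountably often.

  Given a colouring with countably many colours, each colour class meeting uncountably many
  \<open>R\<^sub>z\<close> contains an uncountable transversal of them, and the traces of these transversals on a
  suitable countable initial segment of \<open>\<omega>\<^sub>1\<close> form a family that is guessed at some \<open>\<eta>\<close> lying
  outside the countably many \<open>R\<^sub>z\<close> met by the remaining colour classes. Then every point of
  \<open>P\<^sub>\<eta> \<union> R\<^sub>\<eta>\<close> shares its colour with another point, so the colouring is not conflict free.
\<close>

lemma countable_iff_ordLeq_natLeq: "countable A \<longleftrightarrow> |A| \<le>o natLeq"
proof -
  have "countable A \<longleftrightarrow> |A| \<le>o |UNIV :: nat set|"
    unfolding countable_def card_of_ordLeq[symmetric] by auto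
  also have "\<dots> \<longleftrightarrow> |A| \<le>o natLeq"
    by (meson card_of_nat ordIso_iff_ordLeq ordLeq_transitive)
  finally show ?thesis .
qed

lemma card_of_inj_on_image: "inj_on f A \<Longrightarrow> |f ` A| =o |A|"
  using card_of_ordIso bij_betw_imageI ordIso_symmetric by blast

lemma card_of_Un_countable:
  assumes "countable P" "infinite X"
  shows "|P \<union> X| =o |X|"
proof -
  have "|P| \<le>o natLeq" "natLeq \<le>o |X|"
    using assms countable_iff_ordLeq_natLeq infinite_iff_natLeq_ordLeq by blast+
  then have "|P| \<le>o |X|"
    by (rule ordLeq_transitive)
  then have "|P \<union> X| \<le>o |X|"
    using assms(2) by (intro card_of_Un_ordLeq_infinite_Field)
      (simp_all add: Field_card_of card_of_card_order_on ordLeq_refl[OF card_of_Card_order])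
  moreover have "|X| \<le>o |P \<union> X|"
    by (rule card_of_mono1) blast
  ultimately show ?thesis
    by (simp add: ordIso_iff_ordLeq)
qed

section \<open>Countable ordinals\<close>

abbreviation \<omega>\<^sub>1 :: "nat set set" where "\<omega>\<^sub>1 \<equiv> Field omega1"

definition less1 :: "nat set \<Rightarrow> nat set \<Rightarrow> bool" (infix \<open>\<lhd>\<close> 50) where
  "x \<lhd> y \<longleftrightarrow> (x, y) \<in> omega1 \<and> x \<noteq> y"

lemma Card_order_omega1: "Card_order omega1"
  by (simp add: cardSuc_Card_order natLeq_Card_order)

lemma Well_order_omega1: "Well_order omega1"
  using Card_order_omega1 card_order_on_well_order_on by blast

lemma wo_rel_omega1: "wo_rel omega1"
  using Well_order_omega1 wo_rel_def by blast

lemma omega1_refl: "x \<in> \<omega>\<^sub>1 \<Longrightarrow> (x, x) \<in> omega1"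
  using wo_rel.REFL[OF wo_rel_omega1] by (simp add: refl_on_def)

lemma omega1_trans: "(x, y) \<in> omega1 \<Longrightarrow> (y, z) \<in> omega1 \<Longrightarrow> (x, z) \<in> omega1"
  using wo_rel.TRANS[OF wo_rel_omega1] by (blast dest: transD)

lemma less1_le_trans: "(x, y) \<in> omega1 \<Longrightarrow> y \<lhd> z \<Longrightarrow> x \<lhd> z"
proof -
  assume xy: "(x, y) \<in> omega1" and yz: "y \<lhd> z"
  have "x \<noteq> z"
  proof
    assume "x = z"
    with xy yz have "y = z"
      using wo_rel.ANTISYM[OF wo_rel_omega1] unfolding less1_def by (auto dest: antisymD)
    with yz show False
      by (simp add: less1_def)
  qed
  with xy yz show ?thesis
    using omega1_trans unfolding less1_def by blast
qed

lemma less1_irrefl: "\<not> x \<lhd> x"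
  by (simp add: less1_def)

lemma less1_imp_le: "x \<lhd> y \<Longrightarrow> (x, y) \<in> omega1"
  by (simp add: less1_def)

lemma less1_trans: "x \<lhd> y \<Longrightarrow> y \<lhd> z \<Longrightarrow> x \<lhd> z"
  by (rule less1_le_trans[OF less1_imp_le])

lemma not_le_imp_less1: "x \<in> \<omega>\<^sub>1 \<Longrightarrow> y \<in> \<omega>\<^sub>1 \<Longrightarrow> (y, x) \<notin> omega1 \<Longrightarrow> x \<lhd> y"
proof -
  assume "x \<in> \<omega>\<^sub>1" "y \<in> \<omega>\<^sub>1" "(y, x) \<notin> omega1"
  moreover have "\<forall>a\<in>\<omega>\<^sub>1. \<forall>b\<in>\<omega>\<^sub>1. (a, b) \<in> omega1 \<or> (b, a) \<in> omega1"
    using wo_rel.TOTALS[OF wo_rel_omega1] .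
  ultimately show ?thesis
    using omega1_refl unfolding less1_def by metis
qed

lemma less1_linear: "x \<in> \<omega>\<^sub>1 \<Longrightarrow> y \<in> \<omega>\<^sub>1 \<Longrightarrow> x \<lhd> y \<or> x = y \<or> y \<lhd> x"
  using not_le_imp_less1[of x y] by (auto simp: less1_def)

lemma less1_iff_in_underS: "x \<lhd> y \<longleftrightarrow> x \<in> underS omega1 y"
  by (auto simp: less1_def underS_def)

lemma countable_iff_ordLess_omega1: "countable A \<longleftrightarrow> |A| <o omega1"
  unfolding countable_iff_ordLeq_natLeq
  by (simp add: cardSuc_ordLeq_ordLess card_of_Card_order natLeq_Card_order)

lemma card_of_omega1: "|\<omega>\<^sub>1| =o omega1"
  by (rule card_of_Field_ordIso[OF Card_order_omega1])

lemma uncountable_omega1: "\<not> countable \<omega>\<^sub>1"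
  using card_of_omega1 countable_iff_ordLess_omega1 not_ordLess_ordIso by blast

lemma omega1_nonempty: "\<omega>\<^sub>1 \<noteq> {}"
  using uncountable_omega1 by auto

lemma countable_under_omega1: "countable (under omega1 x)"
proof (cases "x \<in> \<omega>\<^sub>1")
  case True
  have "countable (underS omega1 x)"
    using card_of_underS[OF Card_order_omega1 True] countable_iff_ordLess_omega1 by blast
  moreover have "under omega1 x \<subseteq> insert x (underS omega1 x)"
    unfolding under_def underS_def by auto
  ultimately show ?thesis
    by (meson countable_insert countable_subset)
next
  case False
  then have "under omega1 x = {}"
    unfolding under_def by (auto dest: FieldI2)
  then show ?thesis
    by simp
qed

lemma countable_underS_omega1: "countable (underS omega1 x)"
  by (rule countable_subset[OF underS_subset_under countable_under_omega1])

lemma exists_upper_bound_in: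
  assumes "countable X" "X \<subseteq> \<omega>\<^sub>1" "T \<subseteq> \<omega>\<^sub>1" "\<not> countable T"
  shows "\<exists>p\<in>T. \<forall>x\<in>X. x \<lhd> p"
proof -
  have "countable (\<Union>x\<in>X. under omega1 x)"
    using assms(1) countable_under_omega1 by (rule countable_UN)
  then have "\<not> T \<subseteq> (\<Union>x\<in>X. under omega1 x)"
    using assms(4) countable_subset by auto
  then obtain p where p: "p \<in> T" "p \<notin> (\<Union>x\<in>X. under omega1 x)"
    by blast
  have "x \<lhd> p" if "x \<in> X" for x
    using p that assms(2,3) not_le_imp_less1[of x p] by (auto simp: under_def)
  with p show ?thesis
    by blast
qed

section \<open>Rich sets and almost disjoint sequences\<close>

definition finitely_preceded :: "nat set set \<Rightarrow> bool" where
  "finitely_preceded X \<longleftrightarrow> (\<forall>x\<in>X. finite {y\<in>X. y \<lhd> x})"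

definition rich_over :: "nat set set \<Rightarrow> nat set set \<Rightarrow> bool" where
  "rich_over L S \<longleftrightarrow> (\<forall>b\<in>L. \<exists>p\<in>S. b \<lhd> p \<and> infinite {y\<in>S. b \<lhd> y \<and> y \<lhd> p})"

lemma rich_over_antimono: "L' \<subseteq> L \<Longrightarrow> rich_over L S \<Longrightarrow> rich_over L' S"
  unfolding rich_over_def by blast

lemma rich_over_imp_nonempty: "rich_over L S \<Longrightarrow> L \<noteq> {} \<Longrightarrow> S \<noteq> {}"
  unfolding rich_over_def by blast

lemma uncountable_imp_rich_over_omega1:
  assumes "T \<subseteq> \<omega>\<^sub>1" "\<not> countable T"
  shows "rich_over \<omega>\<^sub>1 T"
  unfolding rich_over_def
proof
  fix b assume b: "b \<in> \<omega>\<^sub>1"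
  have T: "T \<subseteq> {y\<in>T. b \<lhd> y} \<union> under omega1 b"
    using assms(1) b not_le_imp_less1[of b] by (auto simp: under_def)
  have "infinite {y\<in>T. b \<lhd> y}"
  proof
    assume "finite {y\<in>T. b \<lhd> y}"
    then have "countable ({y\<in>T. b \<lhd> y} \<union> under omega1 b)"
      using countable_finite countable_under_omega1 countable_Un by blast
    then show False
      using assms(2) countable_subset[OF T] by blast
  qed
  then obtain A where A: "A \<subseteq> {y\<in>T. b \<lhd> y}" "countable A" "infinite A"
    using infinite_countable_subset' by blast
  obtain p where p: "p \<in> T" "\<forall>x\<in>A. x \<lhd> p"
    using exists_upper_bound_in[OF A(2) _ assms] A(1) assms(1) by blast
  obtain a where "a \<in> A"
    using infinite_imp_nonempty[OF A(3)] by blast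
  with A(1) p have "b \<lhd> p"
    using less1_trans[of b a p] by blast
  moreover have "A \<subseteq> {y\<in>T. b \<lhd> y \<and> y \<lhd> p}"
    using A(1) p by blast
  then have "infinite {y\<in>T. b \<lhd> y \<and> y \<lhd> p}"
    using A(3) by (rule infinite_super)
  ultimately show "\<exists>p\<in>T. b \<lhd> p \<and> infinite {y\<in>T. b \<lhd> y \<and> y \<lhd> p}"
    using p(1) by blast
qed

text \<open>A set of order type \<open>\<omega>\<close> either meets the interval \<open>(b, p\<^sub>1)\<close> in finitely many points
  or lies entirely below \<open>p\<^sub>1\<close>; in the second case the next interval \<open>(p\<^sub>1, p\<^sub>2)\<close> is untouched.\<close>

lemma rich_over_avoids_finitely_preceded:
  assumes "finite \<Y>" "\<forall>Y\<in>\<Y>. finitely_preceded Y" "S \<subseteq> L" "rich_over L S" "b \<in> L"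
  shows "\<exists>p\<in>S. b \<lhd> p \<and> infinite ({y\<in>S. b \<lhd> y \<and> y \<lhd> p} - \<Union>\<Y>)"
  using assms(1,2,5)
proof (induction \<Y> arbitrary: b rule: finite_induct)
  case empty
  then show ?case
    using assms(4) unfolding rich_over_def by simp
next
  case (insert Y \<Y>)
  obtain p\<^sub>1 where p\<^sub>1: "p\<^sub>1 \<in> S" "b \<lhd> p\<^sub>1" "infinite ({y\<in>S. b \<lhd> y \<and> y \<lhd> p\<^sub>1} - \<Union>\<Y>)"
    using insert by blast
  obtain p\<^sub>2 where p\<^sub>2: "p\<^sub>2 \<in> S" "p\<^sub>1 \<lhd> p\<^sub>2" "infinite ({y\<in>S. p\<^sub>1 \<lhd> y \<and> y \<lhd> p\<^sub>2} - \<Union>\<Y>)"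
    using insert.IH[of p\<^sub>1] insert.prems p\<^sub>1(1) assms(3) by blast
  show ?case
  proof (cases "finite {y\<in>Y. b \<lhd> y \<and> y \<lhd> p\<^sub>1}")
    case True
    have "({y\<in>S. b \<lhd> y \<and> y \<lhd> p\<^sub>1} - \<Union>\<Y>) - {y\<in>Y. b \<lhd> y \<and> y \<lhd> p\<^sub>1}
        \<subseteq> {y\<in>S. b \<lhd> y \<and> y \<lhd> p\<^sub>1} - \<Union>(insert Y \<Y>)"
      by blast
    moreover have "infinite (({y\<in>S. b \<lhd> y \<and> y \<lhd> p\<^sub>1} - \<Union>\<Y>) - {y\<in>Y. b \<lhd> y \<and> y \<lhd> p\<^sub>1})"
      using p\<^sub>1(3) True by (rule Diff_infinite_finite[rotated])
    ultimately show ?thesis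
      using p\<^sub>1(1,2) infinite_super by blast
  next
    case False
    have "\<not> p\<^sub>1 \<lhd> y" if "y \<in> Y" for y
    proof
      assume "p\<^sub>1 \<lhd> y"
      then have "{z\<in>Y. b \<lhd> z \<and> z \<lhd> p\<^sub>1} \<subseteq> {z\<in>Y. z \<lhd> y}"
        using less1_trans by blast
      moreover have "finite {z\<in>Y. z \<lhd> y}"
        using insert.prems that unfolding finitely_preceded_def by blast
      ultimately show False
        using False finite_subset by blast
    qed
    then have "{y\<in>S. p\<^sub>1 \<lhd> y \<and> y \<lhd> p\<^sub>2} - \<Union>\<Y> \<subseteq> {y\<in>S. b \<lhd> y \<and> y \<lhd> p\<^sub>2} - \<Union>(insert Y \<Y>)"
      using p\<^sub>1(2) less1_trans[of b p\<^sub>1] by blast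
    then have "infinite ({y\<in>S. b \<lhd> y \<and> y \<lhd> p\<^sub>2} - \<Union>(insert Y \<Y>))"
      using p\<^sub>2(3) infinite_super by blast
    then show ?thesis
      using p\<^sub>1(2) p\<^sub>2(1,2) less1_trans by blast
  qed
qed

lemma rich_over_avoids:
  assumes "finite \<Y>" "\<forall>Y\<in>\<Y>. finitely_preceded Y \<or> finite (Y \<inter> S)" "S \<subseteq> L" "rich_over L S"
    "b \<in> L"
  shows "infinite ({y\<in>S. b \<lhd> y} - \<Union>\<Y>)"
proof -
  let ?\<Y>\<^sub>p = "{Y\<in>\<Y>. finitely_preceded Y}" and ?\<Y>\<^sub>f = "{Y\<in>\<Y>. \<not> finitely_preceded Y}"
  have "finite ?\<Y>\<^sub>p"
    using assms(1) by simp
  then obtain p where p: "infinite ({y\<in>S. b \<lhd> y \<and> y \<lhd> p} - \<Union>?\<Y>\<^sub>p)"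
    using rich_over_avoids_finitely_preceded[of ?\<Y>\<^sub>p S L b] assms(3-5) by blast
  have "finite ?\<Y>\<^sub>f"
    using assms(1) by simp
  moreover have "finite (Y \<inter> S)" if "Y \<in> ?\<Y>\<^sub>f" for Y
    using that assms(2) by blast
  ultimately have "finite (\<Union>Y\<in>?\<Y>\<^sub>f. Y \<inter> S)"
    by (rule finite_UN_I)
  then have "infinite (({y\<in>S. b \<lhd> y \<and> y \<lhd> p} - \<Union>?\<Y>\<^sub>p) - (\<Union>Y\<in>?\<Y>\<^sub>f. Y \<inter> S))"
    using p by (rule Diff_infinite_finite)
  moreover have "({y\<in>S. b \<lhd> y \<and> y \<lhd> p} - \<Union>?\<Y>\<^sub>p) - (\<Union>Y\<in>?\<Y>\<^sub>f. Y \<inter> S)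
      \<subseteq> {y\<in>S. b \<lhd> y} - \<Union>\<Y>"
    by blast
  ultimately show ?thesis
    using infinite_super by blast
qed

lemma exists_increasing_choice:
  assumes "\<forall>n. A n \<subseteq> L" "\<forall>n. \<forall>b\<in>L. infinite ({y\<in>A n. b \<lhd> y} - Z n)" "L \<noteq> {}"
  shows "\<exists>c. \<forall>n. c n \<in> A n - Z n \<and> c n \<lhd> c (Suc n)"
proof -
  have next_point: "\<exists>y. y \<in> A n - Z n \<and> b \<lhd> y" if "b \<in> L" for b n
  proof -
    have "{y\<in>A n. b \<lhd> y} - Z n \<noteq> {}"
      using assms(2) that by (intro infinite_imp_nonempty) blast
    then show ?thesis by blast
  qed
  obtain b where "b \<in> L"
    using assms(3) by blast
  then have "\<exists>x. x \<in> A 0 - Z 0"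
    using next_point by blast
  moreover have "\<exists>y. y \<in> A (Suc n) - Z (Suc n) \<and> x \<lhd> y" if "x \<in> A n - Z n" for x n
    using next_point that assms(1) by blast
  ultimately show ?thesis
    using dependent_nat_choice[of "\<lambda>n x. x \<in> A n - Z n" "\<lambda>n x y. x \<lhd> y"] by blast
qed

lemma increasing_less1:
  assumes "\<forall>n. c n \<lhd> c (Suc n)" "m < n"
  shows "c m \<lhd> c n"
  using assms(2)
proof (induction n)
  case (Suc n)
  show ?case
  proof (cases "m = n")
    case True
    then show ?thesis
      using assms(1) by simp
  next
    case False
    then have "c m \<lhd> c n"
      using Suc by simp
    then show ?thesis
      using assms(1) less1_trans by blast
  qed
qed simp

lemma increasing_inj:
  assumes "\<forall>n. c n \<lhd> c (Suc n)"
  shows "inj c"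
proof (rule injI)
  fix m n assume "c m = c n"
  then show "m = n"
    using increasing_less1[OF assms, of m n] increasing_less1[OF assms, of n m] less1_irrefl
    by (cases m n rule: linorder_cases) auto
qed

lemma increasing_finitely_preceded:
  assumes "\<forall>n. c n \<lhd> c (Suc n)"
  shows "finitely_preceded (range c)"
  unfolding finitely_preceded_def
proof
  fix x assume "x \<in> range c"
  then obtain n where n: "x = c n" by blast
  have "{y\<in>range c. y \<lhd> x} \<subseteq> c ` {..<n}"
  proof
    fix y assume "y \<in> {y\<in>range c. y \<lhd> x}"
    then obtain m where "y = c m" "c m \<lhd> c n"
      using n by blast
    then have "m < n"
      using increasing_less1[OF assms, of n m] less1_irrefl less1_trans[of "c m" "c n" "c m"]
      by (cases m n rule: linorder_cases) auto
    with \<open>y = c m\<close> show "y \<in> c ` {..<n}" by blast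
  qed
  then show "finite {y\<in>range c. y \<lhd> x}"
    using finite_subset by blast
qed

text \<open>Enumerate \<open>\<Y>\<close> and let the \<open>n\<close>-th point avoid the first \<open>n\<close> members of \<open>\<Y>\<close>.\<close>

lemma exists_increasing_almost_disjoint:
  assumes "L \<noteq> {}" "\<forall>n. A n \<subseteq> L" "\<forall>n. rich_over L (A n)"
    and "countable \<Y>" "\<forall>Y\<in>\<Y>. finitely_preceded Y \<or> (\<forall>n. finite (Y \<inter> A n))"
  shows "\<exists>c. (\<forall>n. c n \<in> A n) \<and> (\<forall>n. c n \<lhd> c (Suc n)) \<and> (\<forall>Y\<in>\<Y>. finite (range c \<inter> Y))"
proof -
  define Y where "Y = from_nat_into (insert {} \<Y>)"
  have Y_in: "Y i \<in> insert {} \<Y>" for i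
    unfolding Y_def by (rule from_nat_into) simp
  define Z where "Z n = \<Union>(Y ` {..n})" for n
  have "infinite ({y\<in>A n. b \<lhd> y} - Z n)" if "b \<in> L" for n b
    unfolding Z_def
  proof (rule rich_over_avoids)
    show "\<forall>Y'\<in>Y ` {..n}. finitely_preceded Y' \<or> finite (Y' \<inter> A n)"
    proof
      fix Y' assume "Y' \<in> Y ` {..n}"
      then have "Y' \<in> insert {} \<Y>"
        using Y_in by blast
      then show "finitely_preceded Y' \<or> finite (Y' \<inter> A n)"
        using assms(5) by auto
    qed
  qed (use assms(2,3) that in auto)
  then obtain c where c: "\<forall>n. c n \<in> A n - Z n \<and> c n \<lhd> c (Suc n)"
    using exists_increasing_choice[OF assms(2) _ assms(1)] by blast
  have "finite (range c \<inter> Y')" if Y': "Y' \<in> \<Y>" for Y'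
  proof -
    obtain i where i: "Y i = Y'"
      using from_nat_into_surj[of "insert {} \<Y>" Y'] assms(4) Y' unfolding Y_def by auto
    have "range c \<inter> Y' \<subseteq> c ` {..<i}"
    proof
      fix x assume x: "x \<in> range c \<inter> Y'"
      then obtain n where n: "x = c n" by blast
      have "n < i"
      proof (rule ccontr)
        assume "\<not> n < i"
        then have "Y' \<subseteq> Z n"
          unfolding Z_def using i by (auto intro!: bexI[of _ i])
        then show False
          using c x n by auto
      qed
      then show "x \<in> c ` {..<i}"
        using n by blast
    qed
    then show ?thesis
      using finite_subset by blast
  qed
  then show ?thesis
    using c by blast
qed

lemma exists_bound_of_rich_intervals:
  assumes "countable I" "\<forall>i\<in>I. T i \<subseteq> \<omega>\<^sub>1 \<and> \<not> countable (T i)" "x \<in> \<omega>\<^sub>1"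
  shows "\<exists>y\<in>\<omega>\<^sub>1. x \<lhd> y \<and> (\<forall>i\<in>I. \<exists>p\<in>T i. x \<lhd> p \<and> p \<lhd> y \<and> infinite {z\<in>T i. x \<lhd> z \<and> z \<lhd> p})"
proof -
  have "\<exists>p\<in>T i. x \<lhd> p \<and> infinite {z\<in>T i. x \<lhd> z \<and> z \<lhd> p}" if "i \<in> I" for i
    using uncountable_imp_rich_over_omega1[of "T i"] assms(2,3) that
    unfolding rich_over_def by blast
  then obtain p where p: "\<And>i. i \<in> I \<Longrightarrow> p i \<in> T i \<and> x \<lhd> p i \<and> infinite {z\<in>T i. x \<lhd> z \<and> z \<lhd> p i}"
    by metis
  have "countable (insert x (p ` I))"
    using assms(1) by simp
  moreover have "p i \<in> \<omega>\<^sub>1" if "i \<in> I" for i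
    using p[OF that] assms(2) that by blast
  then have "insert x (p ` I) \<subseteq> \<omega>\<^sub>1"
    using assms(3) by blast
  ultimately obtain y where "y \<in> \<omega>\<^sub>1" "\<forall>z\<in>insert x (p ` I). z \<lhd> y"
    using exists_upper_bound_in[OF _ _ order_refl uncountable_omega1] by blast
  then show ?thesis
    using p by blast
qed

lemma exists_countable_downset_rich:
  assumes "countable I" "\<forall>i\<in>I. T i \<subseteq> \<omega>\<^sub>1 \<and> \<not> countable (T i)"
  shows "\<exists>L\<subseteq>\<omega>\<^sub>1. L \<noteq> {} \<and> countable L \<and> (\<forall>x\<in>L. under omega1 x \<subseteq> L)
    \<and> (\<forall>i\<in>I. rich_over L (T i \<inter> L))"
proof -
  define Q where "Q x y \<longleftrightarrow>
    x \<lhd> y \<and> (\<forall>i\<in>I. \<exists>p\<in>T i. x \<lhd> p \<and> p \<lhd> y \<and> infinite {z\<in>T i. x \<lhd> z \<and> z \<lhd> p})" for x y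
  have "\<exists>x. x \<in> \<omega>\<^sub>1"
    using omega1_nonempty by blast
  moreover have "\<exists>y. y \<in> \<omega>\<^sub>1 \<and> Q x y" if "x \<in> \<omega>\<^sub>1" for x
    using exists_bound_of_rich_intervals[OF assms that] unfolding Q_def by blast
  ultimately obtain b where b: "\<forall>n. b n \<in> \<omega>\<^sub>1 \<and> Q (b n) (b (Suc n))"
    using dependent_nat_choice[of "\<lambda>_ x. x \<in> \<omega>\<^sub>1" "\<lambda>_. Q"] by blast
  define L where "L = (\<Union>n. under omega1 (b n))"
  have "L \<subseteq> \<omega>\<^sub>1"
    unfolding L_def under_def by (auto intro: FieldI1)
  moreover have "L \<noteq> {}"
    unfolding L_def under_def using b omega1_refl by blast
  moreover have "countable L"
    unfolding L_def by (simp add: countable_under_omega1)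
  moreover have "\<forall>x\<in>L. under omega1 x \<subseteq> L"
    unfolding L_def under_def using omega1_trans by blast
  moreover have "rich_over L (T i \<inter> L)" if i: "i \<in> I" for i
    unfolding rich_over_def
  proof
    fix z assume "z \<in> L"
    then obtain m where m: "(z, b m) \<in> omega1"
      unfolding L_def under_def by blast
    obtain p where p: "p \<in> T i" "b m \<lhd> p" "p \<lhd> b (Suc m)"
      "infinite {y\<in>T i. b m \<lhd> y \<and> y \<lhd> p}"
      using b i unfolding Q_def by blast
    have below: "y \<in> L" if "y \<lhd> b (Suc m)" for y
      using that less1_imp_le unfolding L_def under_def by blast
    have "{y\<in>T i. b m \<lhd> y \<and> y \<lhd> p} \<subseteq> {y\<in>T i \<inter> L. z \<lhd> y \<and> y \<lhd> p}"
      using below less1_trans[of _ p "b (Suc m)"] less1_le_trans[OF m] p(3) by blast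
    then have "infinite {y\<in>T i \<inter> L. z \<lhd> y \<and> y \<lhd> p}"
      using p(4) by (rule infinite_super)
    moreover have "p \<in> T i \<inter> L" "z \<lhd> p"
      using p below less1_le_trans[OF m] by auto
    ultimately show "\<exists>p\<in>T i \<inter> L. z \<lhd> p \<and> infinite {y\<in>T i \<inter> L. z \<lhd> y \<and> y \<lhd> p}"
      by blast
  qed
  ultimately show ?thesis
    by blast
qed

section \<open>Guessing countable families under CH\<close>

type_synonym code = "nat \<Rightarrow> nat \<Rightarrow> nat set"

definition coded_sets :: "code \<Rightarrow> nat set set set" where
  "coded_sets h = range (\<lambda>n. range (h n) \<inter> \<omega>\<^sub>1)"

definition downset :: "nat set set \<Rightarrow> nat set set" where
  "downset X = (\<Union>x\<in>X. under omega1 x)"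

definition guessed :: "(nat set \<Rightarrow> nat set set) \<Rightarrow> code \<Rightarrow> nat set set set" where
  "guessed R h = {S \<in> coded_sets h. S \<noteq> {} \<and> rich_over (downset (\<Union>(coded_sets h))) S
     \<and> (\<forall>z\<in>\<omega>\<^sub>1. finite (S \<inter> R z))}"

lemma countable_guessed: "countable (guessed R h)"
proof -
  have "countable (coded_sets h)"
    unfolding coded_sets_def by simp
  then show ?thesis
    unfolding guessed_def by (rule countable_subset[rotated]) blast
qed

lemma guessed_memberD:
  assumes "S \<in> guessed R h"
  shows "S \<noteq> {}" "countable S" "S \<subseteq> downset (\<Union>(guessed R h))"
    "rich_over (downset (\<Union>(guessed R h))) S" "\<forall>z\<in>\<omega>\<^sub>1. finite (S \<inter> R z)"
proof -
  have SG: "S \<subseteq> \<omega>\<^sub>1" "countable S"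
    using assms unfolding guessed_def coded_sets_def by auto
  have mono: "downset (\<Union>(guessed R h)) \<subseteq> downset (\<Union>(coded_sets h))"
    unfolding downset_def guessed_def by blast
  show "S \<noteq> {}" "\<forall>z\<in>\<omega>\<^sub>1. finite (S \<inter> R z)" "countable S"
    using assms SG unfolding guessed_def by auto
  show "S \<subseteq> downset (\<Union>(guessed R h))"
    using assms SG omega1_refl unfolding downset_def under_def by blast
  show "rich_over (downset (\<Union>(guessed R h))) S"
    using assms rich_over_antimono[OF mono] unfolding guessed_def by blast
qed

lemma exists_code_guessing:
  assumes "countable \<D>" "\<D> \<noteq> {}" "L \<subseteq> \<omega>\<^sub>1" "\<forall>x\<in>L. under omega1 x \<subseteq> L"
    and "\<forall>D\<in>\<D>. D \<noteq> {} \<and> countable D \<and> D \<subseteq> L \<and> rich_over L D \<and> (\<forall>z\<in>\<omega>\<^sub>1. finite (D \<inter> R z))"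
  shows "\<exists>h. guessed R h = \<D>"
proof -
  define h where "h n = from_nat_into (from_nat_into \<D> n)" for n
  have "range (h n) \<inter> \<omega>\<^sub>1 = from_nat_into \<D> n" for n
  proof -
    have D: "from_nat_into \<D> n \<in> \<D>"
      using assms(2) by (rule from_nat_into)
    then have "from_nat_into \<D> n \<noteq> {}" "countable (from_nat_into \<D> n)"
      using assms(5) by auto
    then have "range (h n) = from_nat_into \<D> n"
      unfolding h_def by (rule range_from_nat_into)
    moreover have "from_nat_into \<D> n \<subseteq> \<omega>\<^sub>1"
      using D assms(3,5) by blast
    ultimately show ?thesis
      by blast
  qed
  then have coded: "coded_sets h = \<D>"
    unfolding coded_sets_def using range_from_nat_into[OF assms(2,1)] by simp
  have "downset (\<Union>\<D>) \<subseteq> L"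
    using assms(4,5) unfolding downset_def by blast
  then have "rich_over (downset (\<Union>\<D>)) D" if "D \<in> \<D>" for D
    using that assms(5) rich_over_antimono by blast
  then have "guessed R h = {S \<in> \<D>. S \<noteq> {} \<and> (\<forall>z\<in>\<omega>\<^sub>1. finite (S \<inter> R z))}"
    unfolding guessed_def coded by blast
  also have "\<dots> = \<D>"
    using assms(5) by blast
  finally show ?thesis
    by blast
qed

definition encode_code :: "code \<times> nat set \<Rightarrow> nat set" where
  "encode_code = (\<lambda>(h, x). {prod_encode (0, prod_encode (i, prod_encode (j, k))) | i j k. k \<in> h i j}
     \<union> {prod_encode (1, k) | k. k \<in> x})"

lemma inj_encode_code: "inj encode_code"
proof (rule injI)
  fix a b :: "code \<times> nat set"
  assume eq: "encode_code a = encode_code b"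
  obtain h x h' x' where ab: "a = (h, x)" "b = (h', x')"
    by fastforce
  have mem: "prod_encode (0, prod_encode (i, prod_encode (j, k))) \<in> encode_code (h, x) \<longleftrightarrow> k \<in> h i j"
    "prod_encode (1, k) \<in> encode_code (h, x) \<longleftrightarrow> k \<in> x" for h x i j k
    unfolding encode_code_def by (auto simp: prod_encode_eq)
  have "h = h'" "x = x'"
    using eq mem[where h=h and x=x] mem[where h=h' and x=x'] unfolding ab by blast+
  then show "a = b"
    using ab by simp
qed

lemma CH_imp_card_of_nat_sets: "CH \<Longrightarrow> |UNIV :: nat set set| =o |\<omega>\<^sub>1|"
proof -
  assume "CH"
  have "|UNIV :: nat set set| =o |UNIV :: real set|"
    using nat_sets_eqpoll_reals eqpoll_iff_card_of_ordIso by blast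
  also have "|UNIV :: real set| =o omega1"
    using \<open>CH\<close> unfolding CH_def .
  also have "omega1 =o |\<omega>\<^sub>1|"
    using card_of_omega1 by (rule ordIso_symmetric)
  finally show ?thesis .
qed

text \<open>Under CH there are only \<open>\<aleph>\<^sub>1\<close> codes, so a single \<open>\<omega>\<^sub>1\<close>-sequence can list every code
  uncountably often.\<close>

lemma CH_imp_guessing:
  assumes CH
  shows "\<exists>e :: nat set \<Rightarrow> code. \<forall>h. \<not> countable {\<eta>\<in>\<omega>\<^sub>1. e \<eta> = h}"
proof -
  have "|UNIV :: (code \<times> nat set) set| \<le>o |UNIV :: nat set set|"
    using inj_encode_code by (rule card_of_ordLeqI) simp
  then have "|UNIV :: (code \<times> nat set) set| \<le>o |\<omega>\<^sub>1|"
    using CH_imp_card_of_nat_sets[OF assms] by (rule ordLeq_ordIso_trans)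
  then obtain j :: "code \<times> nat set \<Rightarrow> nat set" where j: "inj j" "range j \<subseteq> \<omega>\<^sub>1"
    unfolding card_of_ordLeq[symmetric] by blast
  define e where "e \<eta> = fst (inv j \<eta>)" for \<eta>
  have "\<not> countable {\<eta>\<in>\<omega>\<^sub>1. e \<eta> = h}" for h
  proof
    assume "countable {\<eta>\<in>\<omega>\<^sub>1. e \<eta> = h}"
    moreover have "(\<lambda>y. j (h, y)) ` \<omega>\<^sub>1 \<subseteq> {\<eta>\<in>\<omega>\<^sub>1. e \<eta> = h}"
    proof (rule image_subsetI)
      fix y
      have "j (h, y) \<in> \<omega>\<^sub>1"
        using j(2) by blast
      moreover have "e (j (h, y)) = h"
        unfolding e_def inv_f_f[OF j(1)] by simp
      ultimately show "j (h, y) \<in> {\<eta>\<in>\<omega>\<^sub>1. e \<eta> = h}"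
        by blast
    qed
    ultimately have "countable ((\<lambda>y. j (h, y)) ` \<omega>\<^sub>1)"
      by (rule countable_subset[rotated])
    moreover have "inj_on (\<lambda>y. j (h, y)) \<omega>\<^sub>1"
    proof (rule inj_onI)
      fix y y' assume "j (h, y) = j (h, y')"
      then have "(h, y) = (h, y')"
        by (rule injD[OF j(1)])
      then show "y = y'"
        by simp
    qed
    ultimately show False
      using countable_image_inj_on uncountable_omega1 by auto
  qed
  then show ?thesis
    by blast
qed

section \<open>The transfinite construction\<close>

lemma well_order_recursive_choice:
  assumes "Well_order r"
    and "\<And>x F. x \<in> Field r \<Longrightarrow> (\<And>y. y \<in> underS r x \<Longrightarrow> Q y (F ` underS r y) (F y))
      \<Longrightarrow> \<exists>v. Q x (F ` underS r x) v"
  shows "\<exists>F. \<forall>x\<in>Field r. Q x (F ` underS r x) (F x)"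
proof -
  have wo: "wo_rel r"
    using assms(1) wo_rel_def by blast
  define H where "H F x = (SOME v. Q x (F ` underS r x) v)" for F x
  define F where "F = wo_rel.worec r H"
  have "wo_rel.adm_wo r H"
    unfolding wo_rel.adm_wo_def[OF wo]
  proof (intro allI impI)
    fix f g :: "'a \<Rightarrow> 'b" and x assume "\<forall>y\<in>underS r x. f y = g y"
    then have "f ` underS r x = g ` underS r x"
      by (simp add: image_def)
    then show "H f x = H g x"
      unfolding H_def by simp
  qed
  then have "F = H F"
    unfolding F_def by (rule wo_rel.worec_fixpoint[OF wo])
  then have F_eq: "F x = (SOME v. Q x (F ` underS r x) v)" for x
    unfolding H_def by (rule fun_cong[where x = x, THEN trans]) simp
  have "x \<in> Field r \<longrightarrow> Q x (F ` underS r x) (F x)" for x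
  proof (induction x rule: wo_rel.well_order_induct[OF wo])
    case (1 x)
    show ?case
    proof
      assume x: "x \<in> Field r"
      have "Q y (F ` underS r y) (F y)" if "y \<in> underS r x" for y
        using 1 that FieldI1[of y x r] unfolding underS_def by blast
      then have "\<exists>v. Q x (F ` underS r x) v"
        using assms(2)[OF x] by blast
      then show "Q x (F ` underS r x) (F x)"
        unfolding F_eq[of x] by (rule someI_ex)
    qed
  qed
  then show ?thesis
    by blast
qed

lemma countable_meeting_indices:
  assumes "disjoint_family_on R I" "countable U"
  shows "countable {z\<in>I. R z \<inter> U \<noteq> {}}"
proof -
  let ?Z = "{z\<in>I. R z \<inter> U \<noteq> {}}"
  define g where "g z = (SOME u. u \<in> R z \<inter> U)" for z
  have g: "g z \<in> R z \<inter> U" if "z \<in> ?Z" for z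
  proof -
    have "R z \<inter> U \<noteq> {}"
      using that by blast
    then show ?thesis
      unfolding g_def by (rule some_in_eq[THEN iffD2])
  qed
  have "inj_on g ?Z"
  proof (rule inj_onI)
    fix z z' assume z: "z \<in> ?Z" "z' \<in> ?Z" "g z = g z'"
    show "z = z'"
    proof (rule ccontr)
      assume "z \<noteq> z'"
      then have "R z \<inter> R z' = {}"
        using z(1,2) by (intro disjoint_family_onD[OF assms(1)]) auto
      then show False
        using g[OF z(1)] g[OF z(2)] z(3) by auto
    qed
  qed
  moreover have "g ` ?Z \<subseteq> U"
    using g by blast
  then have "countable (g ` ?Z)"
    using assms(2) by (rule countable_subset)
  ultimately show ?thesis
    by (rule countable_image_inj_on[rotated])
qed

definition pairing_set ::
    "nat set set set \<Rightarrow> (nat set \<Rightarrow> nat set set) \<Rightarrow> nat set set set \<Rightarrow> nat set set \<Rightarrow> bool" where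
  "pairing_set \<F> R \<Y> P \<longleftrightarrow> finitely_preceded P \<and> countable P \<and> (\<forall>Y\<in>\<Y>. finite (P \<inter> Y))
     \<and> (\<forall>z\<in>\<omega>\<^sub>1. finite (P \<inter> R z)) \<and> (\<forall>S\<in>\<F>. \<exists>x\<in>P \<inter> S. \<exists>y\<in>P \<inter> S. x \<noteq> y)
     \<and> (\<forall>x\<in>P. \<exists>y\<in>P. y \<noteq> x \<and> (\<exists>S\<in>\<F>. x \<in> S \<and> y \<in> S))"

lemma pairing_setD:
  assumes "pairing_set \<F> R \<Y> P"
  shows "finitely_preceded P" "countable P" "\<forall>Y\<in>\<Y>. finite (P \<inter> Y)" "\<forall>z\<in>\<omega>\<^sub>1. finite (P \<inter> R z)"
    "\<forall>S\<in>\<F>. \<exists>x\<in>P \<inter> S. \<exists>y\<in>P \<inter> S. x \<noteq> y" "\<forall>x\<in>P. \<exists>y\<in>P. y \<noteq> x \<and> (\<exists>S\<in>\<F>. x \<in> S \<and> y \<in> S)"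
  using assms unfolding pairing_set_def by simp_all

lemma doubled_enumeration_pairs:
  assumes "countable \<F>" "\<F> \<noteq> {}" "inj c" "\<forall>n. c n \<in> from_nat_into \<F> (n div 2)"
  shows "\<forall>S\<in>\<F>. \<exists>x\<in>range c \<inter> S. \<exists>y\<in>range c \<inter> S. x \<noteq> y"
    and "\<forall>x\<in>range c. \<exists>y\<in>range c. y \<noteq> x \<and> (\<exists>S\<in>\<F>. x \<in> S \<and> y \<in> S)"
proof -
  show "\<forall>S\<in>\<F>. \<exists>x\<in>range c \<inter> S. \<exists>y\<in>range c \<inter> S. x \<noteq> y"
  proof
    fix S assume "S \<in> \<F>"
    then obtain m where m: "from_nat_into \<F> m = S"
      using from_nat_into_surj[OF assms(1)] by blast
    have "c (2 * m) \<in> S" "c (Suc (2 * m)) \<in> S"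
      using assms(4)[rule_format, of "2 * m"] assms(4)[rule_format, of "Suc (2 * m)"] m by simp_all
    moreover have "c (2 * m) \<noteq> c (Suc (2 * m))"
      using assms(3) by (simp add: inj_eq)
    ultimately show "\<exists>x\<in>range c \<inter> S. \<exists>y\<in>range c \<inter> S. x \<noteq> y"
      by blast
  qed
  show "\<forall>x\<in>range c. \<exists>y\<in>range c. y \<noteq> x \<and> (\<exists>S\<in>\<F>. x \<in> S \<and> y \<in> S)"
  proof
    fix x assume "x \<in> range c"
    then obtain n where n: "x = c n"
      by blast
    define n' where "n' = (if even n then Suc n else n - 1)"
    have "n' div 2 = n div 2" "n' \<noteq> n"
      unfolding n'_def by presburger+
    then have "c n' \<noteq> x" "c n' \<in> from_nat_into \<F> (n div 2)" "x \<in> from_nat_into \<F> (n div 2)"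
      using assms(3) assms(4)[rule_format, of n'] assms(4)[rule_format, of n] n
      by (auto simp: inj_eq)
    moreover have "from_nat_into \<F> (n div 2) \<in> \<F>"
      using assms(2) by (rule from_nat_into)
    ultimately show "\<exists>y\<in>range c. y \<noteq> x \<and> (\<exists>S\<in>\<F>. x \<in> S \<and> y \<in> S)"
      by blast
  qed
qed

lemma exists_pairing_set:
  assumes "countable \<F>" "disjoint_family_on R \<omega>\<^sub>1"
    and \<F>: "\<forall>S\<in>\<F>. S \<noteq> {} \<and> countable S \<and> S \<subseteq> L \<and> rich_over L S \<and> (\<forall>z\<in>\<omega>\<^sub>1. finite (S \<inter> R z))"
    and "countable \<Y>" "\<forall>Y\<in>\<Y>. finitely_preceded Y"
  shows "\<exists>P. pairing_set \<F> R \<Y> P"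
proof (cases "\<F> = {}")
  case True
  then have "pairing_set \<F> R \<Y> {}"
    unfolding pairing_set_def finitely_preceded_def by simp
  then show ?thesis
    by blast
next
  case False
  define A where "A n = from_nat_into \<F> (n div 2)" for n
  have A: "A n \<in> \<F>" for n
    unfolding A_def using False by (rule from_nat_into)
  define U where "U = \<Union>\<F>"
  have "countable U"
    unfolding U_def using countable_UN[of \<F> "\<lambda>S. S"] assms(1) \<F> by simp
  define Z where "Z = {z\<in>\<omega>\<^sub>1. R z \<inter> U \<noteq> {}}"
  have "countable Z"
    unfolding Z_def using assms(2) \<open>countable U\<close> by (rule countable_meeting_indices)
  \<comment> \<open>only countably many \<open>R z\<close> meet \<open>\<Union>\<F>\<close>; they are avoided together with \<open>\<Y>\<close>\<close>
  define \<Y>' where "\<Y>' = \<Y> \<union> R ` Z"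
  have "countable \<Y>'"
    unfolding \<Y>'_def using assms(4) \<open>countable Z\<close> by simp
  moreover have "finitely_preceded Y \<or> (\<forall>n. finite (Y \<inter> A n))" if Y: "Y \<in> \<Y>'" for Y
  proof (cases "Y \<in> \<Y>")
    case False
    then obtain z where "z \<in> \<omega>\<^sub>1" "Y = R z"
      using Y unfolding \<Y>'_def Z_def by blast
    then have "finite (Y \<inter> A n)" for n
      using \<F> A[of n] by (simp add: Int_commute)
    then show ?thesis
      by blast
  qed (use assms(5) in blast)
  moreover have "A 0 \<subseteq> L" "A 0 \<noteq> {}"
    using \<F> A[of 0] by auto
  ultimately obtain c where c: "\<forall>n. c n \<in> A n" "\<forall>n. c n \<lhd> c (Suc n)" "\<forall>Y\<in>\<Y>'. finite (range c \<inter> Y)"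
    using exists_increasing_almost_disjoint[of L A \<Y>'] A \<F> by blast
  have "range c \<subseteq> U"
    using c(1) A unfolding U_def by blast
  have "finite (range c \<inter> R z)" if "z \<in> \<omega>\<^sub>1" for z
  proof (cases "z \<in> Z")
    case True
    then show ?thesis
      using c(3) unfolding \<Y>'_def by blast
  next
    case False
    then have "range c \<inter> R z = {}"
      using that \<open>range c \<subseteq> U\<close> unfolding Z_def by blast
    then show ?thesis
      by simp
  qed
  moreover have "\<forall>Y\<in>\<Y>. finite (range c \<inter> Y)"
    using c(3) unfolding \<Y>'_def by blast
  moreover note doubled_enumeration_pairs[OF assms(1) False increasing_inj[OF c(2)]]
  ultimately have "pairing_set \<F> R \<Y> (range c)"
    unfolding pairing_set_def using c(1) increasing_finitely_preceded[OF c(2)] A_def by simp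
  then show ?thesis
    by blast
qed

lemma exists_pairing_family:
  assumes "disjoint_family_on R \<omega>\<^sub>1"
  shows "\<exists>P. \<forall>\<eta>\<in>\<omega>\<^sub>1. pairing_set (guessed R (e \<eta>)) R (P ` underS omega1 \<eta>) (P \<eta>)"
proof (rule well_order_recursive_choice[OF Well_order_omega1])
  fix \<eta> P
  assume IH: "\<And>\<zeta>. \<zeta> \<in> underS omega1 \<eta> \<Longrightarrow>
    pairing_set (guessed R (e \<zeta>)) R (P ` underS omega1 \<zeta>) (P \<zeta>)"
  let ?L = "downset (\<Union>(guessed R (e \<eta>)))"
  have "\<forall>S\<in>guessed R (e \<eta>). S \<noteq> {} \<and> countable S \<and> S \<subseteq> ?L \<and> rich_over ?L S
      \<and> (\<forall>z\<in>\<omega>\<^sub>1. finite (S \<inter> R z))"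
    using guessed_memberD[of _ R "e \<eta>"] by simp
  moreover have "countable (P ` underS omega1 \<eta>)"
    using countable_underS_omega1 by simp
  moreover have "\<forall>Y\<in>P ` underS omega1 \<eta>. finitely_preceded Y"
    using IH unfolding pairing_set_def by simp
  ultimately show "\<exists>P'. pairing_set (guessed R (e \<eta>)) R (P ` underS omega1 \<eta>) P'"
    by (rule exists_pairing_set[OF countable_guessed assms])
qed

lemma pairing_family_almost_disjoint:
  assumes "\<forall>\<eta>\<in>\<omega>\<^sub>1. pairing_set (\<F> \<eta>) R (P ` underS omega1 \<eta>) (P \<eta>)"
    and "\<eta> \<in> \<omega>\<^sub>1" "\<zeta> \<in> \<omega>\<^sub>1" "\<eta> \<noteq> \<zeta>"
  shows "finite (P \<eta> \<inter> P \<zeta>)"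
proof -
  have earlier: "finite (P x \<inter> P y)" if "x \<in> \<omega>\<^sub>1" "y \<in> underS omega1 x" for x y
    using assms(1) that unfolding pairing_set_def by simp
  show ?thesis
    using less1_linear[OF assms(2,3)] assms(2-4) earlier[of \<zeta> \<eta>] earlier[of \<eta> \<zeta>]
    by (auto simp: less1_iff_in_underS Int_commute)
qed

section \<open>Colourings with countably many colours\<close>

lemma uncountable_transversal:
  assumes "disjoint_family_on R I" "Z \<subseteq> I" "\<not> countable Z" "\<forall>z\<in>Z. K \<inter> R z \<noteq> {}"
  shows "\<exists>T\<subseteq>K. \<not> countable T \<and> (\<forall>z\<in>I. finite (T \<inter> R z))"
proof -
  define g where "g z = (SOME x. x \<in> K \<inter> R z)" for z
  have g: "g z \<in> K \<inter> R z" if "z \<in> Z" for z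
  proof -
    have "K \<inter> R z \<noteq> {}"
      using assms(4) that by blast
    then show ?thesis
      unfolding g_def by (rule some_in_eq[THEN iffD2])
  qed
  have disj: "R z \<inter> R z' = {}" if "z \<in> I" "z' \<in> I" "z \<noteq> z'" for z z'
    using assms(1) that by (rule disjoint_family_onD)
  have "inj_on g Z"
  proof (rule inj_onI)
    fix z z' assume z: "z \<in> Z" "z' \<in> Z" "g z = g z'"
    show "z = z'"
    proof (rule ccontr)
      assume "z \<noteq> z'"
      then have "R z \<inter> R z' = {}"
        using z(1,2) assms(2) disj by blast
      then show False
        using g[OF z(1)] g[OF z(2)] z(3) by auto
    qed
  qed
  then have "\<not> countable (g ` Z)"
    using assms(3) countable_image_inj_on by blast
  moreover have "finite (g ` Z \<inter> R z)" if "z \<in> I" for z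
  proof -
    have "g ` Z \<inter> R z \<subseteq> {g z}"
      using g disj[OF that] assms(2) by blast
    then show ?thesis
      by (rule finite_subset) simp
  qed
  moreover have "g ` Z \<subseteq> K"
    using g by blast
  ultimately show ?thesis
    by blast
qed

lemma exists_code_for_colour_classes:
  assumes R: "disjoint_family_on R \<omega>\<^sub>1"
    and "countable C" "C \<noteq> {}" "\<forall>c\<in>C. K c \<subseteq> \<omega>\<^sub>1"
    and spread: "\<forall>c\<in>C. \<not> countable {z\<in>\<omega>\<^sub>1. K c \<inter> R z \<noteq> {}}"
  shows "\<exists>h. (\<forall>S\<in>guessed R h. \<exists>c. S \<subseteq> K c) \<and> (\<forall>c\<in>C. \<exists>S\<in>guessed R h. S \<subseteq> K c)"
proof -
  have "\<exists>T\<subseteq>K c. \<not> countable T \<and> (\<forall>z\<in>\<omega>\<^sub>1. finite (T \<inter> R z))" if "c \<in> C" for c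
    using that spread
    by (intro uncountable_transversal[OF R, of "{z\<in>\<omega>\<^sub>1. K c \<inter> R z \<noteq> {}}"]) auto
  then obtain T where T: "\<And>c. c \<in> C \<Longrightarrow> T c \<subseteq> K c \<and> \<not> countable (T c) \<and> (\<forall>z\<in>\<omega>\<^sub>1. finite (T c \<inter> R z))"
    by metis
  have "\<forall>c\<in>C. T c \<subseteq> \<omega>\<^sub>1 \<and> \<not> countable (T c)"
  proof
    fix c assume "c \<in> C"
    then show "T c \<subseteq> \<omega>\<^sub>1 \<and> \<not> countable (T c)"
      using T[of c] assms(4) by blast
  qed
  from exists_countable_downset_rich[OF assms(2) this] obtain L where L: "L \<subseteq> \<omega>\<^sub>1" "L \<noteq> {}"
    "countable L" "\<forall>x\<in>L. under omega1 x \<subseteq> L" "\<forall>c\<in>C. rich_over L (T c \<inter> L)"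
    by blast
  have D: "T c \<inter> L \<noteq> {} \<and> countable (T c \<inter> L) \<and> T c \<inter> L \<subseteq> L \<and> rich_over L (T c \<inter> L)
    \<and> (\<forall>z\<in>\<omega>\<^sub>1. finite (T c \<inter> L \<inter> R z))" if "c \<in> C" for c
  proof -
    have "finite (T c \<inter> L \<inter> R z)" if "z \<in> \<omega>\<^sub>1" for z
    proof (rule finite_subset)
      show "T c \<inter> L \<inter> R z \<subseteq> T c \<inter> R z"
        by blast
      show "finite (T c \<inter> R z)"
        using T[OF \<open>c \<in> C\<close>] that by blast
    qed
    moreover have "rich_over L (T c \<inter> L)"
      using L(5) that by blast
    moreover have "T c \<inter> L \<noteq> {}"
      using rich_over_imp_nonempty[OF \<open>rich_over L (T c \<inter> L)\<close> L(2)] .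
    ultimately show ?thesis
      using L(3) by simp
  qed
  obtain h where h: "guessed R h = (\<lambda>c. T c \<inter> L) ` C"
    using exists_code_guessing[of "(\<lambda>c. T c \<inter> L) ` C" L R] assms(2,3) L(1,4) D by auto
  have "T c \<inter> L \<subseteq> K c" if "c \<in> C" for c
    using T[OF that] by blast
  then have "(\<forall>S\<in>guessed R h. \<exists>c. S \<subseteq> K c) \<and> (\<forall>c\<in>C. \<exists>S\<in>guessed R h. S \<subseteq> K c)"
    unfolding h by blast
  then show ?thesis
    by blast
qed

lemma pairing_set_no_unique_colour:
  assumes "pairing_set \<F> R \<Y> P" "\<forall>S\<in>\<F>. \<exists>c. \<forall>y\<in>S. f y = c"
    and "\<forall>x\<in>Q. \<exists>S\<in>\<F>. \<forall>y\<in>S. f y = f x"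
  shows "\<not> (\<exists>!x. x \<in> P \<union> Q \<and> f x = c)"
proof
  assume "\<exists>!x. x \<in> P \<union> Q \<and> f x = c"
  then obtain x where x: "x \<in> P \<union> Q" "f x = c" and unique: "\<And>y. y \<in> P \<union> Q \<Longrightarrow> f y = c \<Longrightarrow> y = x"
    by blast
  have "\<exists>y\<in>P. y \<noteq> x \<and> f y = f x"
  proof (cases "x \<in> P")
    case True
    then obtain y S where y: "y \<in> P" "y \<noteq> x" "S \<in> \<F>" "x \<in> S" "y \<in> S"
      using pairing_setD(6)[OF assms(1)] by blast
    then obtain c' where "\<forall>y\<in>S. f y = c'"
      using assms(2) by blast
    then show ?thesis
      using y by auto
  next
    case False
    then obtain S where S: "S \<in> \<F>" "\<forall>y\<in>S. f y = f x"
      using x(1) assms(3) by blast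
    then obtain a b where "a \<in> P \<inter> S" "b \<in> P \<inter> S" "a \<noteq> b"
      using pairing_setD(5)[OF assms(1)] by blast
    then show ?thesis
      using S(2) by blast
  qed
  then show False
    using unique x(2) by blast
qed

lemma cf_coloring_unique_colour:
  assumes "cf_coloring A f C" "X \<in> A"
  shows "\<exists>c. \<exists>!x. x \<in> X \<and> f x = c"
proof -
  have "\<forall>X\<in>A. \<exists>c\<in>C. \<exists>!x. x \<in> X \<and> f x = c"
    using assms(1) unfolding cf_coloring_def by (rule conjunct2)
  then have "\<exists>c\<in>C. \<exists>!x. x \<in> X \<and> f x = c"
    using assms(2) by (rule bspec)
  then show ?thesis
    by (rule bexE) (rule exI)
qed

lemma exists_guess_outside:
  assumes "\<forall>h. \<not> countable {\<eta>\<in>\<omega>\<^sub>1. e \<eta> = h}" "countable Z"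
  shows "\<exists>\<eta>\<in>\<omega>\<^sub>1. e \<eta> = h \<and> \<eta> \<notin> Z"
proof -
  have "\<not> {\<eta>\<in>\<omega>\<^sub>1. e \<eta> = h} \<subseteq> Z"
    using assms countable_subset by blast
  then show ?thesis
    by blast
qed

lemma pairing_family_no_countable_cf_coloring:
  assumes guess: "\<forall>h. \<not> countable {\<eta>\<in>\<omega>\<^sub>1. e \<eta> = h}"
    and R: "disjoint_family_on R \<omega>\<^sub>1" "\<forall>z\<in>\<omega>\<^sub>1. R z \<noteq> {} \<and> R z \<subseteq> \<omega>\<^sub>1"
    and P: "\<forall>\<eta>\<in>\<omega>\<^sub>1. pairing_set (guessed R (e \<eta>)) R (P ` underS omega1 \<eta>) (P \<eta>)"
    and f: "cf_coloring ((\<lambda>\<eta>. P \<eta> \<union> R \<eta>) ` \<omega>\<^sub>1) f C"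
  shows "\<not> countable C"
proof
  assume "countable C"
  let ?A = "(\<lambda>\<eta>. P \<eta> \<union> R \<eta>) ` \<omega>\<^sub>1"
  define K where "K c = {x\<in>\<omega>\<^sub>1 \<inter> \<Union>?A. f x = c}" for c
  define Z where "Z c = {z\<in>\<omega>\<^sub>1. K c \<inter> R z \<noteq> {}}" for c
  define C' where "C' = {c\<in>C. \<not> countable (Z c)}"
  have fC: "f ` \<Union>?A \<subseteq> C"
    using f unfolding cf_coloring_def by blast
  have "\<omega>\<^sub>1 \<subseteq> (\<Union>c\<in>C. Z c)"
  proof
    fix z assume z: "z \<in> \<omega>\<^sub>1"
    then obtain x where x: "x \<in> R z"
      using R(2) by blast
    then have "x \<in> \<Union>?A" "x \<in> \<omega>\<^sub>1"
      using z R(2) by blast+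
    then have "f x \<in> C" "z \<in> Z (f x)"
      using fC x z unfolding Z_def K_def by blast+
    then show "z \<in> (\<Union>c\<in>C. Z c)"
      by blast
  qed
  then have "C' \<noteq> {}"
    using uncountable_omega1 countable_UN[OF \<open>countable C\<close>, of Z] countable_subset
    unfolding C'_def by blast
  moreover have "countable C'"
    using \<open>countable C\<close> unfolding C'_def by (rule countable_subset[rotated]) blast
  moreover have "\<forall>c\<in>C'. K c \<subseteq> \<omega>\<^sub>1"
    unfolding K_def by blast
  moreover have "\<forall>c\<in>C'. \<not> countable {z\<in>\<omega>\<^sub>1. K c \<inter> R z \<noteq> {}}"
    unfolding C'_def Z_def by blast
  ultimately obtain h where h: "\<forall>S\<in>guessed R h. \<exists>c. S \<subseteq> K c" "\<forall>c\<in>C'. \<exists>S\<in>guessed R h. S \<subseteq> K c"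
    using exists_code_for_colour_classes[OF R(1), of C' K] by blast
  have "countable (C - C')"
    using \<open>countable C\<close> by (rule countable_subset[rotated]) blast
  moreover have "countable (Z c)" if "c \<in> C - C'" for c
    using that unfolding C'_def by blast
  ultimately have "countable (\<Union>c\<in>C - C'. Z c)"
    by (rule countable_UN)
  then obtain \<eta> where \<eta>: "\<eta> \<in> \<omega>\<^sub>1" "e \<eta> = h" "\<eta> \<notin> (\<Union>c\<in>C - C'. Z c)"
    using exists_guess_outside[OF guess] by blast
  have "\<forall>S\<in>guessed R (e \<eta>). \<exists>c. \<forall>y\<in>S. f y = c"
  proof
    fix S assume "S \<in> guessed R (e \<eta>)"
    then obtain c where "S \<subseteq> K c"
      using h(1) \<eta>(2) by blast
    then show "\<exists>c. \<forall>y\<in>S. f y = c"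
      unfolding K_def by blast
  qed
  moreover have "\<forall>x\<in>R \<eta>. \<exists>S\<in>guessed R (e \<eta>). \<forall>y\<in>S. f y = f x"
  proof
    fix x assume x: "x \<in> R \<eta>"
    then have "x \<in> \<Union>?A" "x \<in> \<omega>\<^sub>1"
      using \<eta>(1) R(2) by blast+
    then have "f x \<in> C'"
      using fC x \<eta> unfolding C'_def Z_def K_def by blast
    then obtain S where "S \<in> guessed R (e \<eta>)" "S \<subseteq> K (f x)"
      using h(2) \<eta>(2) by blast
    then show "\<exists>S\<in>guessed R (e \<eta>). \<forall>y\<in>S. f y = f x"
      unfolding K_def by blast
  qed
  ultimately have "\<not> (\<exists>!x. x \<in> P \<eta> \<union> R \<eta> \<and> f x = c)" for c
    by (rule pairing_set_no_unique_colour[OF P[rule_format, OF \<eta>(1)]])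
  moreover have "\<exists>c. \<exists>!x. x \<in> P \<eta> \<union> R \<eta> \<and> f x = c"
    using f by (rule cf_coloring_unique_colour) (use \<eta>(1) in blast)
  ultimately show False
    by blast
qed

lemma exists_disjoint_copies:
  assumes "Y \<subseteq> \<omega>\<^sub>1"
  shows "\<exists>R. disjoint_family_on R \<omega>\<^sub>1 \<and> (\<forall>z\<in>\<omega>\<^sub>1. R z \<subseteq> \<omega>\<^sub>1 \<and> |R z| =o |Y| )"
proof -
  have "infinite \<omega>\<^sub>1"
    using uncountable_omega1 countable_finite by blast
  then have "|\<omega>\<^sub>1 \<times> \<omega>\<^sub>1| \<le>o |\<omega>\<^sub>1|"
    using card_of_Times_same_infinite ordIso_iff_ordLeq by blast
  then obtain k where k: "inj_on k (\<omega>\<^sub>1 \<times> \<omega>\<^sub>1)" "k ` (\<omega>\<^sub>1 \<times> \<omega>\<^sub>1) \<subseteq> \<omega>\<^sub>1"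
    unfolding card_of_ordLeq[symmetric] by blast
  define R where "R z = (\<lambda>y. k (z, y)) ` Y" for z
  have k_eq: "(z, y) = (z', y')" if "k (z, y) = k (z', y')" "z \<in> \<omega>\<^sub>1" "z' \<in> \<omega>\<^sub>1" "y \<in> Y" "y' \<in> Y"
    for z z' y y'
    using that assms by (intro inj_onD[OF k(1)]) auto
  have "disjoint_family_on R \<omega>\<^sub>1"
    unfolding disjoint_family_on_def
  proof (intro ballI impI)
    fix z z' assume z: "z \<in> \<omega>\<^sub>1" "z' \<in> \<omega>\<^sub>1" "z \<noteq> z'"
    show "R z \<inter> R z' = {}"
    proof (rule equals0I)
      fix x assume "x \<in> R z \<inter> R z'"
      then obtain y y' where "y \<in> Y" "y' \<in> Y" "k (z, y) = k (z', y')"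
        unfolding R_def by blast
      then show False
        using k_eq z by blast
    qed
  qed
  moreover have "R z \<subseteq> \<omega>\<^sub>1 \<and> |R z| =o |Y|" if "z \<in> \<omega>\<^sub>1" for z
  proof
    show "R z \<subseteq> \<omega>\<^sub>1"
      unfolding R_def using k(2) that assms by blast
    have "inj_on (\<lambda>y. k (z, y)) Y"
      using k_eq that by (intro inj_onI) blast
    then show "|R z| =o |Y|"
      unfolding R_def by (rule card_of_inj_on_image)
  qed
  ultimately show ?thesis
    by blast
qed

lemma pairing_family_Un_almost_disjoint:
  assumes "disjoint_family_on R \<omega>\<^sub>1" "\<forall>\<eta>\<in>\<omega>\<^sub>1. pairing_set (\<F> \<eta>) R (P ` underS omega1 \<eta>) (P \<eta>)"
    and "\<eta> \<in> \<omega>\<^sub>1" "\<zeta> \<in> \<omega>\<^sub>1" "\<eta> \<noteq> \<zeta>"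
  shows "finite ((P \<eta> \<union> R \<eta>) \<inter> (P \<zeta> \<union> R \<zeta>))"
proof -
  have "(P \<eta> \<union> R \<eta>) \<inter> (P \<zeta> \<union> R \<zeta>) \<subseteq> (P \<eta> \<inter> P \<zeta>) \<union> (P \<eta> \<inter> R \<zeta>) \<union> (P \<zeta> \<inter> R \<eta>) \<union> (R \<eta> \<inter> R \<zeta>)"
    by blast
  moreover have "finite (P \<eta> \<inter> P \<zeta>)"
    using pairing_family_almost_disjoint[OF assms(2-5)] .
  moreover have "finite (P \<eta> \<inter> R \<zeta>)" "finite (P \<zeta> \<inter> R \<eta>)"
    using pairing_setD(4)[OF assms(2)[rule_format, OF assms(3)]]
      pairing_setD(4)[OF assms(2)[rule_format, OF assms(4)]] assms(3,4) by blast+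
  moreover have "R \<eta> \<inter> R \<zeta> = {}"
    using assms(1,3-5) by (rule disjoint_family_onD)
  ultimately show ?thesis
    by (metis finite_Un finite.emptyI finite_subset)
qed

lemma pairing_family_system:
  assumes "disjoint_family_on R \<omega>\<^sub>1" "\<forall>z\<in>\<omega>\<^sub>1. infinite (R z) \<and> |R z| =o \<kappa>"
    and P: "\<forall>\<eta>\<in>\<omega>\<^sub>1. pairing_set (\<F> \<eta>) R (P ` underS omega1 \<eta>) (P \<eta>)"
  shows "system ((\<lambda>\<eta>. P \<eta> \<union> R \<eta>) ` \<omega>\<^sub>1) omega1 \<kappa> natLeq"
proof -
  define B where "B \<eta> = P \<eta> \<union> R \<eta>" for \<eta>
  have almost_disjoint: "finite (B \<eta> \<inter> B \<zeta>)" if "\<eta> \<in> \<omega>\<^sub>1" "\<zeta> \<in> \<omega>\<^sub>1" "\<eta> \<noteq> \<zeta>" for \<eta> \<zeta>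
    unfolding B_def using assms(1) P that by (rule pairing_family_Un_almost_disjoint)
  have "inj_on B \<omega>\<^sub>1"
  proof (rule inj_onI)
    fix \<eta> \<zeta> assume \<eta>\<zeta>: "\<eta> \<in> \<omega>\<^sub>1" "\<zeta> \<in> \<omega>\<^sub>1" "B \<eta> = B \<zeta>"
    show "\<eta> = \<zeta>"
    proof (rule ccontr)
      assume "\<eta> \<noteq> \<zeta>"
      then have "finite (B \<eta>)"
        using almost_disjoint[OF \<eta>\<zeta>(1,2)] \<eta>\<zeta>(3) by simp
      moreover have "infinite (B \<eta>)"
        unfolding B_def using assms(2) \<eta>\<zeta>(1) by simp
      ultimately show False
        by contradiction
    qed
  qed
  then have "|B ` \<omega>\<^sub>1| =o omega1"
    using ordIso_transitive[OF card_of_inj_on_image card_of_omega1] by blast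
  moreover have "|B \<eta>| =o \<kappa>" if "\<eta> \<in> \<omega>\<^sub>1" for \<eta>
  proof -
    have "countable (P \<eta>)"
      using pairing_setD(2)[OF P[rule_format, OF that]] .
    then have "|P \<eta> \<union> R \<eta>| =o |R \<eta>|"
      using assms(2) that by (intro card_of_Un_countable) auto
    then show ?thesis
      unfolding B_def using assms(2) that ordIso_transitive by blast
  qed
  moreover have "|X \<inter> X'| <o natLeq" if "X \<in> B ` \<omega>\<^sub>1" "X' \<in> B ` \<omega>\<^sub>1" "X \<noteq> X'" for X X'
  proof -
    have "finite (X \<inter> X')"
      using that almost_disjoint by blast
    then show ?thesis
      by (simp only: finite_iff_ordLess_natLeq)
  qed
  ultimately show ?thesis
    unfolding system_def B_def by blast
qed

lemma exists_system_without_countable_cf_coloring: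
  assumes "CH" "Card_order \<kappa>" "natLeq \<le>o \<kappa>" "\<kappa> \<le>o omega1"
  shows "\<exists>A :: nat set set set. system A omega1 \<kappa> natLeq
    \<and> (\<forall>(f :: nat set \<Rightarrow> 'c) C. cf_coloring A f C \<longrightarrow> \<not> countable C)"
proof -
  have "|Field \<kappa>| \<le>o omega1"
    using card_of_Field_ordIso[OF assms(2)] assms(4) by (rule ordIso_ordLeq_trans)
  from internalize_card_of_ordLeq[THEN iffD1, OF this]
  obtain Y where Y: "Y \<subseteq> \<omega>\<^sub>1" "|Field \<kappa>| =o |Y|"
    by blast
  have "|Y| =o \<kappa>"
    using ordIso_symmetric[OF Y(2)] card_of_Field_ordIso[OF assms(2)] by (rule ordIso_transitive)
  obtain R where R: "disjoint_family_on R \<omega>\<^sub>1" "\<And>z. z \<in> \<omega>\<^sub>1 \<Longrightarrow> R z \<subseteq> \<omega>\<^sub>1 \<and> |R z| =o |Y|"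
    using exists_disjoint_copies[OF Y(1)] by blast
  have R_card: "|R z| =o \<kappa>" if "z \<in> \<omega>\<^sub>1" for z
    using conjunct2[OF R(2)[OF that]] \<open>|Y| =o \<kappa>\<close> by (rule ordIso_transitive)
  have R_infinite: "infinite (R z)" if "z \<in> \<omega>\<^sub>1" for z
    using ordLeq_ordIso_trans[OF assms(3) ordIso_symmetric[OF R_card[OF that]]]
      infinite_iff_natLeq_ordLeq by blast
  obtain e :: "nat set \<Rightarrow> code" where e: "\<forall>h. \<not> countable {\<eta>\<in>\<omega>\<^sub>1. e \<eta> = h}"
    using CH_imp_guessing[OF assms(1)] by blast
  obtain P where P: "\<forall>\<eta>\<in>\<omega>\<^sub>1. pairing_set (guessed R (e \<eta>)) R (P ` underS omega1 \<eta>) (P \<eta>)"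
    using exists_pairing_family[OF R(1)] by blast
  have "system ((\<lambda>\<eta>. P \<eta> \<union> R \<eta>) ` \<omega>\<^sub>1) omega1 \<kappa> natLeq"
    using R(1) _ P by (rule pairing_family_system) (use R_infinite R_card in blast)
  moreover have "\<forall>z\<in>\<omega>\<^sub>1. R z \<noteq> {} \<and> R z \<subseteq> \<omega>\<^sub>1"
    using R(2) R_infinite by fastforce
  then have "\<forall>(f :: nat set \<Rightarrow> 'c) C. cf_coloring ((\<lambda>\<eta>. P \<eta> \<union> R \<eta>) ` \<omega>\<^sub>1) f C \<longrightarrow> \<not> countable C"
    using pairing_family_no_countable_cf_coloring[OF e R(1) _ P] by blast
  ultimately show ?thesis
    by blast
qed

lemma chiCF_le_omega1_if_small:
  fixes A :: "'a set set"
  assumes "|A| \<le>o omega1" "\<forall>X\<in>A. X \<noteq> {} \<and> |X| \<le>o omega1"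
  shows "chiCF_le A omega1"
proof -
  have "|A| \<le>o |\<omega>\<^sub>1|"
    using assms(1) ordIso_symmetric[OF card_of_omega1] by (rule ordLeq_ordIso_trans)
  moreover have "\<forall>X\<in>A. |X| \<le>o |\<omega>\<^sub>1|"
    using assms(2) ordLeq_ordIso_trans[OF _ ordIso_symmetric[OF card_of_omega1]] by blast
  moreover have "infinite \<omega>\<^sub>1"
    using uncountable_omega1 countable_finite by blast
  ultimately have "|\<Union>A| \<le>o |\<omega>\<^sub>1|"
    using card_of_UNION_ordLeq_infinite[of "\<omega>\<^sub>1" A "\<lambda>X. X"] by simp
  then obtain g where g: "inj_on g (\<Union>A)" "g ` \<Union>A \<subseteq> \<omega>\<^sub>1"
    unfolding card_of_ordLeq[symmetric] by blast
  have "cf_coloring A g (g ` \<Union>A)"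
    unfolding cf_coloring_def
  proof (intro conjI ballI)
    fix X assume X: "X \<in> A"
    then obtain x where x: "x \<in> X"
      using assms(2) by blast
    have "\<exists>!y. y \<in> X \<and> g y = g x"
    proof (rule ex1I)
      show "x \<in> X \<and> g x = g x"
        using x by simp
      fix y assume "y \<in> X \<and> g y = g x"
      then show "y = x"
        using X x inj_onD[OF g(1)] by blast
    qed
    moreover have "g x \<in> g ` \<Union>A"
      using X x by blast
    ultimately show "\<exists>z\<in>g ` \<Union>A. \<exists>!y. y \<in> X \<and> g y = z"
      by (rule bexI)
  qed simp
  moreover have "|g ` \<Union>A| \<le>o omega1"
    using card_of_mono1[OF g(2)] card_of_omega1 by (rule ordLeq_ordIso_trans)
  ultimately show ?thesis
    unfolding chiCF_le_def by blast
qed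

lemma system_chiCF_le_omega1:
  assumes "system A omega1 \<kappa> \<mu>" "natLeq \<le>o \<kappa>" "\<kappa> \<le>o omega1"
  shows "chiCF_le A omega1"
proof (rule chiCF_le_omega1_if_small)
  show "|A| \<le>o omega1"
    using assms(1) ordIso_iff_ordLeq unfolding system_def by blast
  show "\<forall>X\<in>A. X \<noteq> {} \<and> |X| \<le>o omega1"
  proof
    fix X assume "X \<in> A"
    then have X: "|X| =o \<kappa>"
      using assms(1) unfolding system_def by blast
    then have "natLeq \<le>o |X|"
      using assms(2) ordIso_symmetric ordLeq_ordIso_trans by blast
    then have "X \<noteq> {}"
      using infinite_iff_natLeq_ordLeq by blast
    moreover have "|X| \<le>o omega1"
      using X assms(3) by (rule ordIso_ordLeq_trans)
    ultimately show "X \<noteq> {} \<and> |X| \<le>o omega1"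
      by blast
  qed
qed

lemma not_chiCF_le_if_no_countable_coloring:
  fixes A :: "'a set set"
  assumes "\<forall>(f :: 'a \<Rightarrow> nat set) C. cf_coloring A f C \<longrightarrow> \<not> countable C" "\<rho> <o omega1"
  shows "\<not> chiCF_le A \<rho>"
proof
  assume "chiCF_le A \<rho>"
  then obtain f :: "'a \<Rightarrow> nat set" and C where "cf_coloring A f C" "|C| \<le>o \<rho>"
    unfolding chiCF_le_def by blast
  moreover have "countable C"
    using ordLeq_ordLess_trans[OF \<open>|C| \<le>o \<rho>\<close> assms(2)] countable_iff_ordLess_omega1 by blast
  ultimately show False
    using assms(1) by blast
qed

theorem theorem10p3:
  assumes "CH"
  shows "(\<forall>A :: 'a set set. system A omega1 omega1 omega0 \<longrightarrow> chiCF_le A omega1)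
       \<and> (\<forall>\<rho> :: nat set rel. Card_order \<rho> \<and> \<rho> <o omega1 \<longrightarrow>
            (\<exists>A :: nat set set set. system A omega1 omega1 omega0 \<and> \<not> chiCF_le A \<rho>))
       \<and> (\<forall>A :: 'a set set. system A omega1 omega0 omega0 \<longrightarrow> chiCF_le A omega1)
       \<and> (\<forall>\<rho> :: nat set rel. Card_order \<rho> \<and> \<rho> <o omega1 \<longrightarrow>
            (\<exists>A :: nat set set set. system A omega1 omega0 omega0 \<and> \<not> chiCF_le A \<rho>))"
proof -
  have le: "natLeq \<le>o omega1" "natLeq \<le>o natLeq" "omega1 \<le>o omega1"
    using ordLess_imp_ordLeq[OF cardSuc_greater[OF natLeq_Card_order]]
      ordLeq_refl[OF natLeq_Card_order] ordLeq_refl[OF Card_order_omega1] by blast+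
  have "\<exists>A :: nat set set set. system A omega1 omega1 natLeq \<and> \<not> chiCF_le A \<rho>"
    if "\<rho> <o omega1" for \<rho> :: "nat set rel"
    using exists_system_without_countable_cf_coloring[OF assms Card_order_omega1 le(1,3)]
      not_chiCF_le_if_no_countable_coloring[OF _ that] by blast
  moreover have "\<exists>A :: nat set set set. system A omega1 natLeq natLeq \<and> \<not> chiCF_le A \<rho>"
    if "\<rho> <o omega1" for \<rho> :: "nat set rel"
    using exists_system_without_countable_cf_coloring[OF assms natLeq_Card_order le(2,1)]
      not_chiCF_le_if_no_countable_coloring[OF _ that] by blast
  moreover have "chiCF_le A omega1" if "system A omega1 omega1 natLeq" for A :: "'a set set"
    using that le(1,3) by (rule system_chiCF_le_omega1)
  moreover have "chiCF_le A omega1" if "system A omega1 natLeq natLeq" for A :: "'a set set"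
    using that le(2,1) by (rule system_chiCF_le_omega1)
  ultimately show ?thesis
    by blast
qed

end
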